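(* Let $\mathcal X,\mathcal Y,\mathcal Z$ be finite sets, $\rho$ a probability distribution on $\mathcal X$, $\mathsf E:\mathcal Y\to\mathcal Z$ a map, $\pi_0$ a reference policy with $\pi_0(y\mid x)>0$ for all $x,y$, and $\beta>0$. Let $\mathcal R:\Delta(\mathcal Z)\to\mathbb R$ be convex and lower semi-continuous. Then: (1) For every policy $\pi\in\Delta(\mathcal Y)^{\mathcal X}$, $$\mathcal J(\pi)=\sup_{\mathsf q}\ \mathcal G(\pi,\mathsf q),$$ where the supremum ranges over all families $\mathsf q=(\mathsf q(\cdot\mid x))_{x\in\mathcal X}$ with each $\mathsf q(\cdot\mid x)$ in the interior of $\Delta(\mathcal Z)$. Consequently, for every nonempty set $\Pi\subseteq\Delta(\mathcal Y)^{\mathcal X}$, $\inf_{\pi\in\Pi}\mathcal J(\pi)=\inf_{\pi\in\Pi}\sup_{\mathsf q}\mathcal G(\pi,\mathsf q)$. (2) For a fixed target family $\mathsf q$ (each $\mathsf q(\cdot\mid x)$ in the interior of $\Delta(\mathcal Z)$), define $\tilde{\mathsf q}(y\mid x)=\pi_0(y\mid x)\,\mathsf q(\mathsf E(y)\mid x)/C_x$ with $C_x=\sum_{y'}\pi_0(y'\mid x)\mathsf q(\mathsf E(y')\mid x)$. Then for every $\pi$, $$\mathcal G(\pi,\mathsf q)=\beta\,\mathbb E_{x\sim\rho}\big[\mathrm{D_{KL}}(\pi(\cdot\mid x)\,\|\,\tilde{\mathsf q}(\cdot\mid x))\big]+\kappa(\mathsf q),$$ where $\kappa(\mathsf q)$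 does not depend on $\pi$. In particular, over $\Pi=\Delta(\mathcal Y)^{\mathcal X}$, the minimizer of $\pi\mapsto\mathcal G(\pi,\mathsf q)$ is $\pi^*(y\mid x)\propto\pi_0(y\mid x)\,\mathsf q(\mathsf E(y)\mid x)$, unique on every $x$ with $\rho(x)>0$.
   Context: A policy $\pi\in\Delta(\mathcal Y)^{\mathcal X}$ is a family of conditional distributions $\pi(\cdot\mid x)$ on $\mathcal Y$. Its induced answer marginal is $\nu_\pi(z\mid x)=\sum_{y\in\mathsf E^{-1}(z)}\pi(y\mid x)$. The primal objective is $\mathcal J(\pi)=\mathbb E_{x\sim\rho}\big[\mathcal R(\nu_\pi(\cdot\mid x))+\beta\,\mathrm{D_{KL}}(\pi(\cdot\mid x)\|\pi_0(\cdot\mid x))\big]$. The Fenchel conjugate is $\mathcal R^*(u)=\sup_{\nu\in\Delta(\mathcal Z)}\{\langle\nu,u\rangle-\mathcal R(\nu)\}$ for $u\in\mathbb R^{\mathcal Z}$, and for $\mathsf q$ in the interior of $\Delta(\mathcal Z)$ set $\Psi(\mathsf q)=\mathcal R^*(-\beta\log\mathsf q)$ (log taken coordinatewise). The game objective is $$\mathcal G(\pi,\mathsf q)=\mathbb E_{x\sim\rho}\Big[\beta\,\mathrm{D_{KL}}(\pi(\cdot\mid x)\|\pi_0(\cdot\mid x))-\beta\,\mathbb E_{y\sim\pi(\cdot\mid x)}[\log\mathsf q(\mathsf E(y)\mid x)]-\Psi(\mathsf q(\cdot\mid x))\Big].$$ *)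

theory Defs
  imports "HOL-Analysis.Analysis"
begin

definition prob_simplex :: "(real ^ 'z::finite) set" where
  "prob_simplex = {\<nu>. (\<forall>z. \<nu> $ z \<ge> 0) \<and> (\<Sum>z\<in>UNIV. \<nu> $ z) = 1}"

(* (Relative) interior of the prob_simplex: strictly positive distributions *)
definition prob_simplex_int :: "(real ^ 'z::finite) set" where
  "prob_simplex_int = {\<nu>. (\<forall>z. \<nu> $ z > 0) \<and> (\<Sum>z\<in>UNIV. \<nu> $ z) = 1}"

definition lsc_on :: "'a::topological_space set \<Rightarrow> ('a \<Rightarrow> real) \<Rightarrow> bool" where
  "lsc_on S f \<longleftrightarrow> (\<forall>t. closedin (top_of_set S) {v\<in>S. f v \<le> t})"

definition policies :: "('x \<Rightarrow> real ^ 'y::finite) set" where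
  "policies = {\<pi>. \<forall>x. \<pi> x \<in> prob_simplex}"

definition int_families :: "('x \<Rightarrow> real ^ 'z::finite) set" where
  "int_families = {q. \<forall>x. q x \<in> prob_simplex_int}"

definition KL :: "real ^ 'y::finite \<Rightarrow> real ^ 'y \<Rightarrow> real" where
  "KL p q = (\<Sum>y\<in>UNIV. if p $ y = 0 then 0 else p $ y * ln (p $ y / q $ y))"

definition marginal :: "('y::finite \<Rightarrow> 'z::finite) \<Rightarrow> real ^ 'y \<Rightarrow> real ^ 'z" where
  "marginal E p = (\<chi> z. \<Sum>y\<in>{y. E y = z}. p $ y)"

definition fconj :: "(real ^ 'z::finite \<Rightarrow> real) \<Rightarrow> real ^ 'z \<Rightarrow> real" where
  "fconj R u = (SUP \<nu>\<in>prob_simplex. \<nu> \<bullet> u - R \<nu>)"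

definition Psi :: "real \<Rightarrow> (real ^ 'z::finite \<Rightarrow> real) \<Rightarrow> real ^ 'z \<Rightarrow> real" where
  "Psi \<beta> R q = fconj R (\<chi> z. - \<beta> * ln (q $ z))"

definition Jobj :: "('x::finite \<Rightarrow> real) \<Rightarrow> ('y::finite \<Rightarrow> 'z::finite) \<Rightarrow> ('x \<Rightarrow> real ^ 'y)
    \<Rightarrow> real \<Rightarrow> (real ^ 'z \<Rightarrow> real) \<Rightarrow> ('x \<Rightarrow> real ^ 'y) \<Rightarrow> real" where
  "Jobj \<rho> E \<pi>0 \<beta> R \<pi> = (\<Sum>x\<in>UNIV. \<rho> x * (R (marginal E (\<pi> x)) + \<beta> * KL (\<pi> x) (\<pi>0 x)))"

definition Gobj :: "('x::finite \<Rightarrow> real) \<Rightarrow> ('y::finite \<Rightarrow> 'z::finite) \<Rightarrow> ('x \<Rightarrow> real ^ 'y)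
    \<Rightarrow> real \<Rightarrow> (real ^ 'z \<Rightarrow> real) \<Rightarrow> ('x \<Rightarrow> real ^ 'y) \<Rightarrow> ('x \<Rightarrow> real ^ 'z) \<Rightarrow> real" where
  "Gobj \<rho> E \<pi>0 \<beta> R \<pi> q = (\<Sum>x\<in>UNIV. \<rho> x *
      (\<beta> * KL (\<pi> x) (\<pi>0 x)
       - \<beta> * (\<Sum>y\<in>UNIV. \<pi> x $ y * ln (q x $ E y))
       - Psi \<beta> R (q x)))"

definition qtilde :: "('y::finite \<Rightarrow> 'z::finite) \<Rightarrow> ('x \<Rightarrow> real ^ 'y) \<Rightarrow> ('x \<Rightarrow> real ^ 'z) \<Rightarrow> 'x \<Rightarrow> real ^ 'y" where
  "qtilde E \<pi>0 q x = (\<chi> y. \<pi>0 x $ y * q x $ E y / (\<Sum>y'\<in>UNIV. \<pi>0 x $ y' * q x $ E y'))"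

end

theory Submission
  imports Defs
begin

(* Part (1) is Fenchel-Moreau duality for R, one context x at a time: since R is convex and
   lower semicontinuous it is the supremum of its affine minorants, and every affine minorant
   u can be written as -beta * log q for the softmax q of -u/beta (up to an additive constant,
   which the simplex absorbs). Part (2) is the Gibbs variational principle: the terms of G that
   depend on pi combine into beta * KL(pi || qtilde) minus log-normalisers, and KL is
   nonnegative and vanishes only on the diagonal. *)

lemma closed_prob_simplex: "closed (prob_simplex :: (real^'z::finite) set)"
proof -
  have "prob_simplex = (\<Inter>z. {\<nu>::real^'z. \<nu> $ z \<ge> 0}) \<inter> {\<nu>. (\<Sum>z\<in>UNIV. \<nu> $ z) = 1}"
    unfolding prob_simplex_def by auto
  moreover have "closed {\<nu>::real^'z. (\<Sum>z\<in>UNIV. \<nu> $ z) = 1}"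
    by (intro closed_Collect_eq continuous_intros)
  moreover have "closed {\<nu>::real^'z. \<nu> $ z \<ge> 0}" for z
    by (intro closed_Collect_le continuous_intros)
  ultimately show ?thesis by (metis closed_INT closed_Int)
qed

lemma uniform_in_prob_simplex_int: "(\<chi> z. 1 / real CARD('z::finite)) \<in> (prob_simplex_int :: (real^'z) set)"
  by (simp add: prob_simplex_int_def)

lemma prob_simplex_int_subset: "prob_simplex_int \<subseteq> prob_simplex"
  by (auto simp: prob_simplex_int_def prob_simplex_def less_imp_le)

lemma prob_simplex_nonempty: "prob_simplex \<noteq> {}"
  using uniform_in_prob_simplex_int prob_simplex_int_subset by blast

lemma inner_vec_sum: "(\<mu>::real^'z::finite) \<bullet> u = (\<Sum>z\<in>UNIV. \<mu> $ z * u $ z)"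
  by (simp add: inner_vec_def)

lemma abs_inner_prob_simplex_le:
  assumes "\<mu> \<in> prob_simplex"
  shows "\<bar>\<mu> \<bullet> u\<bar> \<le> (\<Sum>z\<in>UNIV. \<bar>u $ z\<bar>)"
proof -
  have "\<bar>\<mu> \<bullet> u\<bar> \<le> (\<Sum>z\<in>UNIV. \<bar>\<mu> $ z * u $ z\<bar>)"
    unfolding inner_vec_sum by (rule sum_abs)
  also have "\<dots> \<le> (\<Sum>z\<in>UNIV. \<bar>u $ z\<bar>)"
  proof (rule sum_mono)
    fix z
    have "0 \<le> \<mu> $ z" using assms by (simp add: prob_simplex_def)
    moreover have "\<mu> $ z \<le> 1"
      using assms member_le_sum[of z UNIV "\<lambda>z. \<mu> $ z"] by (auto simp: prob_simplex_def)
    ultimately show "\<bar>\<mu> $ z * u $ z\<bar> \<le> \<bar>u $ z\<bar>"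
      by (simp add: abs_mult mult_left_le_one_le)
  qed
  finally show ?thesis .
qed

lemma inner_prob_simplex_shift:
  assumes "\<mu> \<in> prob_simplex"
  shows "\<mu> \<bullet> (\<chi> z. u $ z + c) = \<mu> \<bullet> u + c"
  using assms
  by (simp add: prob_simplex_def inner_vec_sum algebra_simps sum.distrib
      flip: sum_distrib_left)

lemma closed_epigraph_lsc:
  fixes f :: "'a::real_normed_vector \<Rightarrow> real"
  assumes S: "closed S" and f: "lsc_on S f"
  shows "closed (epigraph S f)"
proof (rule closed_sequential_limits[THEN iffD2], intro allI impI, elim conjE)
  fix x :: "nat \<Rightarrow> 'a \<times> real" and l
  assume xs: "\<forall>n. x n \<in> epigraph S f" and lim: "x \<longlonglongrightarrow> l"
  have fst_lim: "(\<lambda>n. fst (x n)) \<longlonglongrightarrow> fst l" and snd_lim: "(\<lambda>n. snd (x n)) \<longlonglongrightarrow> snd l"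
    using lim by (auto intro: tendsto_intros)
  have in_S: "fst l \<in> S"
    using Lim_in_closed_set[OF S _ _ fst_lim] xs by (auto simp: epigraph_def)
  have "f (fst l) \<le> t" if "snd l < t" for t
  proof -
    have "closed {v\<in>S. f v \<le> t}"
      using f S closedin_closed_trans unfolding lsc_on_def by blast
    moreover have "eventually (\<lambda>n. fst (x n) \<in> {v\<in>S. f v \<le> t}) sequentially"
    proof (rule eventually_mono[OF order_tendstoD(2)[OF snd_lim that]])
      fix n assume "snd (x n) < t"
      then show "fst (x n) \<in> {v\<in>S. f v \<le> t}"
        using xs[rule_format, of n] by (auto simp: epigraph_def)
    qed
    ultimately have "fst l \<in> {v\<in>S. f v \<le> t}"
      by (rule Lim_in_closed_set[OF _ _ _ fst_lim]) simp
    then show ?thesis by simp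
  qed
  then have "f (fst l) \<le> snd l"
    by (rule dense_ge)
  with in_S show "l \<in> epigraph S f" by (auto simp: epigraph_def)
qed

(* Separate the point (nu, f nu - eps) strictly from the closed convex epigraph; the
   separating hyperplane is not vertical because it also separates f nu from f nu - eps. *)
lemma convex_lsc_affine_minorant:
  fixes f :: "'a::euclidean_space \<Rightarrow> real"
  assumes S: "closed S" and cv: "convex_on S f" and lsc: "lsc_on S f"
    and \<nu>: "\<nu> \<in> S" and \<epsilon>: "\<epsilon> > 0"
  shows "\<exists>u K. (\<forall>\<mu>\<in>S. \<mu> \<bullet> u - f \<mu> \<le> K) \<and> \<nu> \<bullet> u - K > f \<nu> - \<epsilon>"
proof -
  have "(\<nu>, f \<nu> - \<epsilon>) \<notin> epigraph S f" using \<epsilon> by (auto simp: epigraph_def)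
  from separating_hyperplane_closed_point[OF convex_epigraphI[OF cv] closed_epigraph_lsc[OF S lsc] this]
  obtain a b where ab: "a \<bullet> (\<nu>, f \<nu> - \<epsilon>) < b" "\<forall>x\<in>epigraph S f. a \<bullet> x > b" by blast
  obtain a1 c where a: "a = (a1, c)" by (cases a)
  have below: "a1 \<bullet> \<nu> + c * (f \<nu> - \<epsilon>) < b" using ab(1) a by (simp add: inner_Pair)
  have above: "a1 \<bullet> \<mu> + c * f \<mu> > b" if "\<mu> \<in> S" for \<mu>
    using ab(2) a that by (force simp: epigraph_def inner_Pair)
  from above[OF \<nu>] below have "c * \<epsilon> > 0" by (simp add: algebra_simps)
  then have c: "c > 0" using \<epsilon> by (simp add: zero_less_mult_iff)
  show ?thesis
  proof (intro exI conjI ballI)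
    fix \<mu> assume "\<mu> \<in> S"
    from above[OF this] c have "b / c < (a1 \<bullet> \<mu>) / c + f \<mu>"
      by (simp add: field_simps)
    then show "\<mu> \<bullet> (- (1/c) *\<^sub>R a1) - f \<mu> \<le> - b / c"
      by (simp add: inner_commute)
  next
    from divide_strict_right_mono[OF below c] c have "(a1 \<bullet> \<nu>) / c + (f \<nu> - \<epsilon>) < b / c"
      by (simp add: add_divide_distrib)
    then show "\<nu> \<bullet> (- (1/c) *\<^sub>R a1) - (- b / c) > f \<nu> - \<epsilon>"
      by (simp add: inner_commute)
  qed
qed

context
  fixes R :: "real^'z::finite \<Rightarrow> real"
  assumes R_convex: "convex_on prob_simplex R" and R_lsc: "lsc_on prob_simplex R"
begin

lemma affine_minorant_prob_simplex:
  assumes "\<nu> \<in> prob_simplex" and "\<epsilon> > 0"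
  shows "\<exists>u K. (\<forall>\<mu>\<in>prob_simplex. \<mu> \<bullet> u - R \<mu> \<le> K) \<and> \<nu> \<bullet> u - K > R \<nu> - \<epsilon>"
  using convex_lsc_affine_minorant[OF closed_prob_simplex R_convex R_lsc assms] .

lemma bdd_above_fconj: "bdd_above ((\<lambda>\<mu>. \<mu> \<bullet> u - R \<mu>) ` prob_simplex)"
proof -
  obtain \<nu> :: "real^'z" where "\<nu> \<in> prob_simplex" using prob_simplex_nonempty by blast
  then obtain v K where vK: "\<forall>\<mu>\<in>prob_simplex. \<mu> \<bullet> v - R \<mu> \<le> K"
    using affine_minorant_prob_simplex[of \<nu> 1] by auto
  show ?thesis
  proof (rule bdd_aboveI2)
    fix \<mu> :: "real^'z" assume \<mu>: "\<mu> \<in> prob_simplex"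
    show "\<mu> \<bullet> u - R \<mu> \<le> (\<Sum>z\<in>UNIV. \<bar>u $ z\<bar>) + (\<Sum>z\<in>UNIV. \<bar>v $ z\<bar>) + K"
      using vK \<mu> abs_inner_prob_simplex_le[OF \<mu>, of u] abs_inner_prob_simplex_le[OF \<mu>, of v]
      by force
  qed
qed

lemma fconj_upper: "\<mu> \<in> prob_simplex \<Longrightarrow> \<mu> \<bullet> u - R \<mu> \<le> fconj R u"
  unfolding fconj_def by (rule cSUP_upper[OF _ bdd_above_fconj])

lemma fconj_least: "(\<And>\<mu>. \<mu> \<in> prob_simplex \<Longrightarrow> \<mu> \<bullet> u - R \<mu> \<le> K) \<Longrightarrow> fconj R u \<le> K"
  unfolding fconj_def using prob_simplex_nonempty by (intro cSUP_least) auto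

lemma Psi_fenchel_young:
  assumes "\<nu> \<in> prob_simplex"
  shows "\<nu> \<bullet> (\<chi> z. - \<beta> * ln (q $ z)) - Psi \<beta> R q \<le> R \<nu>"
  using fconj_upper[OF assms, of "\<chi> z. - \<beta> * ln (q $ z)"] unfolding Psi_def by linarith

lemma Psi_dual_approx:
  assumes \<nu>: "\<nu> \<in> prob_simplex" and \<epsilon>: "\<epsilon> > 0" and \<beta>: "\<beta> > 0"
  shows "\<exists>q\<in>prob_simplex_int. \<nu> \<bullet> (\<chi> z. - \<beta> * ln (q $ z)) - Psi \<beta> R q > R \<nu> - \<epsilon>"
proof -
  obtain u K where uK: "\<forall>\<mu>\<in>prob_simplex. \<mu> \<bullet> u - R \<mu> \<le> K"
    and gt: "\<nu> \<bullet> u - K > R \<nu> - \<epsilon>"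
    using affine_minorant_prob_simplex[OF \<nu> \<epsilon>] by auto
  define Z where "Z = (\<Sum>z\<in>UNIV. exp (- u $ z / \<beta>))"
  have Z: "Z > 0" unfolding Z_def by (intro sum_pos) auto
  define q where "q = (\<chi> z. exp (- u $ z / \<beta>) / Z)"
  have q: "q \<in> prob_simplex_int"
    using Z by (simp add: prob_simplex_int_def q_def Z_def flip: sum_divide_distrib)
  have shift: "(\<chi> z. - \<beta> * ln (q $ z)) = (\<chi> z. u $ z + \<beta> * ln Z)"
    using Z \<beta> by (simp add: q_def ln_div algebra_simps)
  have "Psi \<beta> R q \<le> K + \<beta> * ln Z"
    unfolding Psi_def shift
    by (rule fconj_least) (use uK inner_prob_simplex_shift in fastforce)
  then have "\<nu> \<bullet> (\<chi> z. - \<beta> * ln (q $ z)) - Psi \<beta> R q \<ge> \<nu> \<bullet> u - K"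
    unfolding shift inner_prob_simplex_shift[OF \<nu>] by linarith
  with gt q show ?thesis by force
qed

end

lemma sum_marginal:
  fixes E :: "'y::finite \<Rightarrow> 'z::finite"
  shows "(\<Sum>y\<in>UNIV. p $ y * f (E y)) = (\<Sum>z\<in>UNIV. marginal E p $ z * f z)"
proof -
  have "(\<Sum>z\<in>UNIV. marginal E p $ z * f z) = (\<Sum>z\<in>UNIV. \<Sum>y\<in>{y\<in>UNIV. E y = z}. p $ y * f (E y))"
    by (simp add: marginal_def sum_distrib_right)
  also have "\<dots> = (\<Sum>y\<in>UNIV. p $ y * f (E y))"
    by (rule sum.group) auto
  finally show ?thesis by simp
qed

lemma marginal_in_prob_simplex:
  fixes E :: "'y::finite \<Rightarrow> 'z::finite"
  assumes "p \<in> prob_simplex"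
  shows "marginal E p \<in> prob_simplex"
proof -
  have "(\<Sum>z\<in>UNIV. marginal E p $ z) = (\<Sum>y\<in>UNIV. p $ y)"
    using sum_marginal[of p "\<lambda>_. 1" E] by simp
  then show ?thesis using assms
    by (auto simp: prob_simplex_def marginal_def intro!: sum_nonneg)
qed

lemma Gobj_eq_marginal:
  "Gobj \<rho> E \<pi>0 \<beta> R \<pi> q = (\<Sum>x\<in>UNIV. \<rho> x * (\<beta> * KL (\<pi> x) (\<pi>0 x)
      + (marginal E (\<pi> x) \<bullet> (\<chi> z. - \<beta> * ln (q x $ z)) - Psi \<beta> R (q x))))"
  unfolding Gobj_def
proof (rule sum.cong[OF refl])
  fix x
  have "marginal E (\<pi> x) \<bullet> (\<chi> z. - \<beta> * ln (q x $ z)) = - \<beta> * (\<Sum>y\<in>UNIV. \<pi> x $ y * ln (q x $ E y))"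
    unfolding sum_marginal[of "\<pi> x" "\<lambda>z. ln (q x $ z)"] inner_vec_sum
    by (simp add: sum_distrib_left algebra_simps)
  then show "\<rho> x * (\<beta> * KL (\<pi> x) (\<pi>0 x) - \<beta> * (\<Sum>y\<in>UNIV. \<pi> x $ y * ln (q x $ E y)) - Psi \<beta> R (q x))
    = \<rho> x * (\<beta> * KL (\<pi> x) (\<pi>0 x) + (marginal E (\<pi> x) \<bullet> (\<chi> z. - \<beta> * ln (q x $ z)) - Psi \<beta> R (q x)))"
    by simp
qed

lemma Jobj_eq_SUP_Gobj:
  fixes \<rho> :: "'x::finite \<Rightarrow> real" and E :: "'y::finite \<Rightarrow> 'z::finite"
  assumes \<rho>_nonneg: "\<forall>x. \<rho> x \<ge> 0" and \<rho>_sum: "(\<Sum>x\<in>UNIV. \<rho> x) = 1" and \<beta>: "\<beta> > 0"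
    and R_convex: "convex_on prob_simplex R" and R_lsc: "lsc_on prob_simplex R"
    and \<pi>: "\<pi> \<in> policies"
  shows "Jobj \<rho> E \<pi>0 \<beta> R \<pi> = (SUP q\<in>int_families. Gobj \<rho> E \<pi>0 \<beta> R \<pi> q)"
proof -
  have \<nu>: "marginal E (\<pi> x) \<in> prob_simplex" for x
    using \<pi> by (intro marginal_in_prob_simplex) (simp add: policies_def)
  have ne: "int_families \<noteq> ({} :: ('x \<Rightarrow> real^'z) set)"
    using uniform_in_prob_simplex_int by (auto simp: int_families_def)
  have le: "Gobj \<rho> E \<pi>0 \<beta> R \<pi> q \<le> Jobj \<rho> E \<pi>0 \<beta> R \<pi>" for q
    unfolding Gobj_eq_marginal Jobj_def
    by (intro sum_mono mult_left_mono)
      (use Psi_fenchel_young[OF R_convex R_lsc \<nu>] \<rho>_nonneg in auto)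
  have approx: "\<exists>q\<in>int_families. Gobj \<rho> E \<pi>0 \<beta> R \<pi> q \<ge> Jobj \<rho> E \<pi>0 \<beta> R \<pi> - \<epsilon>"
    if \<epsilon>: "\<epsilon> > 0" for \<epsilon>
  proof -
    obtain Q where Q: "\<And>x. Q x \<in> prob_simplex_int"
      "\<And>x. marginal E (\<pi> x) \<bullet> (\<chi> z. - \<beta> * ln (Q x $ z)) - Psi \<beta> R (Q x) > R (marginal E (\<pi> x)) - \<epsilon>"
      using Psi_dual_approx[OF R_convex R_lsc \<nu> \<epsilon> \<beta>] by metis
    have "Jobj \<rho> E \<pi>0 \<beta> R \<pi> - \<epsilon>
        = (\<Sum>x\<in>UNIV. \<rho> x * (R (marginal E (\<pi> x)) + \<beta> * KL (\<pi> x) (\<pi>0 x) - \<epsilon>))"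
      unfolding Jobj_def using \<rho>_sum
      by (simp add: algebra_simps sum_subtractf flip: sum_distrib_left)
    also have "\<dots> \<le> Gobj \<rho> E \<pi>0 \<beta> R \<pi> Q"
      unfolding Gobj_eq_marginal
      by (intro sum_mono mult_left_mono) (use Q(2) \<rho>_nonneg less_imp_le in auto)
    finally show ?thesis using Q(1) by (auto simp: int_families_def)
  qed
  show ?thesis
  proof (rule antisym)
    have bdd: "bdd_above ((\<lambda>q. Gobj \<rho> E \<pi>0 \<beta> R \<pi> q) ` int_families)"
      using le by (intro bdd_aboveI2)
    show "Jobj \<rho> E \<pi>0 \<beta> R \<pi> \<le> (SUP q\<in>int_families. Gobj \<rho> E \<pi>0 \<beta> R \<pi> q)"
    proof (rule field_le_epsilon)
      fix \<epsilon> :: real assume "\<epsilon> > 0"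
      then obtain q where "q \<in> int_families" "Gobj \<rho> E \<pi>0 \<beta> R \<pi> q \<ge> Jobj \<rho> E \<pi>0 \<beta> R \<pi> - \<epsilon>"
        using approx by blast
      moreover from this(1) have "Gobj \<rho> E \<pi>0 \<beta> R \<pi> q \<le> (SUP q\<in>int_families. Gobj \<rho> E \<pi>0 \<beta> R \<pi> q)"
        by (rule cSUP_upper[OF _ bdd])
      ultimately show "Jobj \<rho> E \<pi>0 \<beta> R \<pi> \<le> (SUP q\<in>int_families. Gobj \<rho> E \<pi>0 \<beta> R \<pi> q) + \<epsilon>"
        by linarith
    qed
  next
    show "(SUP q\<in>int_families. Gobj \<rho> E \<pi>0 \<beta> R \<pi> q) \<le> Jobj \<rho> E \<pi>0 \<beta> R \<pi>"
      using ne le by (intro cSUP_least) auto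
  qed
qed

lemma KL_summand_gap:
  fixes a b :: real
  assumes a: "a \<ge> 0" and b: "b > 0"
  shows "0 \<le> (if a = 0 then 0 else a * ln (a / b)) + b - a"
    and "(if a = 0 then 0 else a * ln (a / b)) + b - a = 0 \<Longrightarrow> a = b"
proof -
  consider "a = 0" | "a > 0" using a by linarith
  then have "0 \<le> (if a = 0 then 0 else a * ln (a / b)) + b - a
    \<and> ((if a = 0 then 0 else a * ln (a / b)) + b - a = 0 \<longrightarrow> a = b)"
  proof cases
    case 1
    then show ?thesis using b by simp
  next
    case 2
    have gap: "(if a = 0 then 0 else a * ln (a / b)) + b - a = a * (b / a - 1 - ln (b / a))"
      using 2 b by (simp add: ln_div field_simps)
    have "ln (b / a) \<le> b / a - 1" using 2 b by (intro ln_le_minus_one) simp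
    then have "0 \<le> a * (b / a - 1 - ln (b / a))" using 2 by simp
    moreover have "a = b" if "a * (b / a - 1 - ln (b / a)) = 0"
    proof -
      have "ln (b / a) = b / a - 1" using that 2 by simp
      then have "b / a = 1" using 2 b by (intro ln_eq_minus_one) simp_all
      then show "a = b" using 2 by simp
    qed
    ultimately show ?thesis unfolding gap by simp
  qed
  then show "0 \<le> (if a = 0 then 0 else a * ln (a / b)) + b - a"
    and "(if a = 0 then 0 else a * ln (a / b)) + b - a = 0 \<Longrightarrow> a = b"
    by blast+
qed

lemma KL_eq_sum_gap:
  assumes "p \<in> prob_simplex" and "r \<in> prob_simplex"
  shows "KL p r = (\<Sum>y\<in>UNIV. (if p $ y = 0 then 0 else p $ y * ln (p $ y / r $ y)) + r $ y - p $ y)"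
  using assms by (simp add: KL_def prob_simplex_def sum.distrib sum_subtractf)

lemma KL_nonneg:
  assumes p: "p \<in> prob_simplex" and r: "r \<in> prob_simplex" and r_pos: "\<forall>y. r $ y > 0"
  shows "KL p r \<ge> 0"
  unfolding KL_eq_sum_gap[OF p r]
  by (rule sum_nonneg, rule KL_summand_gap(1)) (use p r_pos in \<open>auto simp: prob_simplex_def\<close>)

lemma KL_self: "KL p p = 0"
  unfolding KL_def by (rule sum.neutral) simp

lemma KL_eq_0_iff:
  assumes p: "p \<in> prob_simplex" and r: "r \<in> prob_simplex" and r_pos: "\<forall>y. r $ y > 0"
  shows "KL p r = 0 \<longleftrightarrow> p = r"
proof
  assume "KL p r = 0"
  have p_nonneg: "p $ y \<ge> 0" for y using p by (simp add: prob_simplex_def)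
  have "\<forall>y\<in>UNIV. (if p $ y = 0 then 0 else p $ y * ln (p $ y / r $ y)) + r $ y - p $ y = 0"
    using \<open>KL p r = 0\<close> unfolding KL_eq_sum_gap[OF p r]
    by (subst (asm) sum_nonneg_eq_0_iff) (use KL_summand_gap(1) p_nonneg r_pos in auto)
  then show "p = r"
    unfolding vec_eq_iff using KL_summand_gap(2) p_nonneg r_pos by blast
qed (simp add: KL_self)

lemma KL_tilt:
  assumes p: "p \<in> prob_simplex" and r: "\<forall>y. r $ y > 0" and g: "\<forall>y. g y > 0" and C: "C > 0"
  shows "KL p (\<chi> y. r $ y * g y / C) = KL p r - (\<Sum>y\<in>UNIV. p $ y * ln (g y)) + ln C"
proof -
  have summand: "(if p $ y = 0 then 0 else p $ y * ln (p $ y / (r $ y * g y / C)))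
      = (if p $ y = 0 then 0 else p $ y * ln (p $ y / r $ y)) - p $ y * ln (g y) + p $ y * ln C" for y
  proof (cases "p $ y = 0")
    case False
    moreover have "p $ y \<ge> 0" using p by (simp add: prob_simplex_def)
    ultimately have "p $ y > 0" by simp
    moreover have "r $ y > 0" "g y > 0" using r g by auto
    ultimately have ln_eq: "ln (p $ y / (r $ y * g y / C)) = ln (p $ y / r $ y) - ln (g y) + ln C"
      using C by (simp add: ln_div ln_mult)
    show ?thesis
      unfolding ln_eq using False by (simp add: algebra_simps)
  qed simp
  have "KL p (\<chi> y. r $ y * g y / C)
      = KL p r - (\<Sum>y\<in>UNIV. p $ y * ln (g y)) + (\<Sum>y\<in>UNIV. p $ y) * ln C"
    unfolding KL_def vec_lambda_beta summand by (simp add: sum.distrib sum_subtractf sum_distrib_right)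
  then show ?thesis using p by (simp add: prob_simplex_def)
qed

lemma qtilde_normaliser_pos:
  assumes "\<forall>x y. \<pi>0 x $ y > 0" and "q \<in> int_families"
  shows "(\<Sum>y\<in>UNIV. \<pi>0 x $ y * q x $ E y) > 0"
  using assms by (intro sum_pos) (auto simp: int_families_def prob_simplex_int_def)

lemma qtilde_pos:
  assumes "\<forall>x y. \<pi>0 x $ y > 0" and "q \<in> int_families"
  shows "qtilde E \<pi>0 q x $ y > 0"
  using assms qtilde_normaliser_pos[OF assms]
  by (simp add: qtilde_def int_families_def prob_simplex_int_def)

lemma qtilde_in_policies:
  assumes "\<forall>x y. \<pi>0 x $ y > 0" and "q \<in> int_families"
  shows "qtilde E \<pi>0 q \<in> policies"
proof -
  have "(\<Sum>y\<in>UNIV. qtilde E \<pi>0 q x $ y) = 1" for x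
    using qtilde_normaliser_pos[OF assms, of x E] by (simp add: qtilde_def flip: sum_divide_distrib)
  then show ?thesis
    using qtilde_pos[OF assms] by (auto simp: policies_def prob_simplex_def less_imp_le)
qed

lemma Gobj_eq_KL_qtilde:
  assumes \<pi>0_pos: "\<forall>x y. \<pi>0 x $ y > 0" and q: "q \<in> int_families" and \<pi>: "\<pi> \<in> policies"
  shows "Gobj \<rho> E \<pi>0 \<beta> R \<pi> q
    = \<beta> * (\<Sum>x\<in>UNIV. \<rho> x * KL (\<pi> x) (qtilde E \<pi>0 q x)) + Gobj \<rho> E \<pi>0 \<beta> R (qtilde E \<pi>0 q) q"
proof -
  define C where "C x = (\<Sum>y\<in>UNIV. \<pi>0 x $ y * q x $ E y)" for x
  define \<kappa> where "\<kappa> = (\<Sum>x\<in>UNIV. \<rho> x * (- \<beta> * ln (C x) - Psi \<beta> R (q x)))"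
  have decomp: "Gobj \<rho> E \<pi>0 \<beta> R \<pi>' q = \<beta> * (\<Sum>x\<in>UNIV. \<rho> x * KL (\<pi>' x) (qtilde E \<pi>0 q x)) + \<kappa>"
    if \<pi>': "\<pi>' \<in> policies" for \<pi>'
  proof -
    have KL_qtilde: "KL (\<pi>' x) (qtilde E \<pi>0 q x)
        = KL (\<pi>' x) (\<pi>0 x) - (\<Sum>y\<in>UNIV. \<pi>' x $ y * ln (q x $ E y)) + ln (C x)" for x
      unfolding qtilde_def C_def
      using \<pi>' \<pi>0_pos q qtilde_normaliser_pos[OF \<pi>0_pos q]
      by (intro KL_tilt) (auto simp: policies_def int_families_def prob_simplex_int_def)
    have tilt: "\<beta> * KL (\<pi>' x) (\<pi>0 x) - \<beta> * (\<Sum>y\<in>UNIV. \<pi>' x $ y * ln (q x $ E y))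
        = \<beta> * KL (\<pi>' x) (qtilde E \<pi>0 q x) - \<beta> * ln (C x)" for x
      unfolding KL_qtilde by (simp add: algebra_simps)
    have "Gobj \<rho> E \<pi>0 \<beta> R \<pi>' q
        = (\<Sum>x\<in>UNIV. \<beta> * (\<rho> x * KL (\<pi>' x) (qtilde E \<pi>0 q x)) + \<rho> x * (- \<beta> * ln (C x) - Psi \<beta> R (q x)))"
      unfolding Gobj_def tilt by (intro sum.cong) (simp_all add: algebra_simps)
    also have "\<dots> = \<beta> * (\<Sum>x\<in>UNIV. \<rho> x * KL (\<pi>' x) (qtilde E \<pi>0 q x)) + \<kappa>"
      by (simp add: \<kappa>_def sum.distrib sum_distrib_left)
    finally show ?thesis .
  qed
  have "Gobj \<rho> E \<pi>0 \<beta> R (qtilde E \<pi>0 q) q = \<kappa>"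
    using decomp[OF qtilde_in_policies[OF \<pi>0_pos q]] by (simp add: KL_self)
  with decomp[OF \<pi>] show ?thesis by simp
qed

lemma weighted_KL_qtilde_nonneg:
  assumes \<rho>_nonneg: "\<forall>x. \<rho> x \<ge> 0" and \<pi>0_pos: "\<forall>x y. \<pi>0 x $ y > 0"
    and q: "q \<in> int_families" and \<pi>: "\<pi> \<in> policies"
  shows "\<rho> x * KL (\<pi> x) (qtilde E \<pi>0 q x) \<ge> 0"
  using \<rho>_nonneg \<pi> qtilde_in_policies[OF \<pi>0_pos q] qtilde_pos[OF \<pi>0_pos q]
  by (intro mult_nonneg_nonneg KL_nonneg) (auto simp: policies_def)

lemma Gobj_qtilde_le:
  assumes "\<forall>x. \<rho> x \<ge> 0" and "\<forall>x y. \<pi>0 x $ y > 0" and "\<beta> > 0"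
    and "q \<in> int_families" and "\<pi> \<in> policies"
  shows "Gobj \<rho> E \<pi>0 \<beta> R (qtilde E \<pi>0 q) q \<le> Gobj \<rho> E \<pi>0 \<beta> R \<pi> q"
  unfolding Gobj_eq_KL_qtilde[OF assms(2,4,5)]
  using weighted_KL_qtilde_nonneg[OF assms(1,2,4,5)] \<open>\<beta> > 0\<close> by (simp add: sum_nonneg)

lemma Gobj_eq_qtilde_imp_eq:
  assumes \<rho>_nonneg: "\<forall>x. \<rho> x \<ge> 0" and \<pi>0_pos: "\<forall>x y. \<pi>0 x $ y > 0" and \<beta>: "\<beta> > 0"
    and q: "q \<in> int_families" and \<pi>: "\<pi> \<in> policies"
    and eq: "Gobj \<rho> E \<pi>0 \<beta> R \<pi> q = Gobj \<rho> E \<pi>0 \<beta> R (qtilde E \<pi>0 q) q" and x: "\<rho> x > 0"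
  shows "\<pi> x = qtilde E \<pi>0 q x"
proof -
  note nonneg = weighted_KL_qtilde_nonneg[OF \<rho>_nonneg \<pi>0_pos q \<pi>]
  have "(\<Sum>x\<in>UNIV. \<rho> x * KL (\<pi> x) (qtilde E \<pi>0 q x)) = 0"
    using eq \<beta> unfolding Gobj_eq_KL_qtilde[OF \<pi>0_pos q \<pi>] by simp
  then have "\<rho> x * KL (\<pi> x) (qtilde E \<pi>0 q x) = 0"
    using nonneg by (simp add: sum_nonneg_eq_0_iff)
  then have "KL (\<pi> x) (qtilde E \<pi>0 q x) = 0" using x by simp
  moreover have "\<pi> x \<in> prob_simplex" "qtilde E \<pi>0 q x \<in> prob_simplex"
    using \<pi> qtilde_in_policies[OF \<pi>0_pos q] by (simp_all add: policies_def)
  ultimately show ?thesis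
    using KL_eq_0_iff qtilde_pos[OF \<pi>0_pos q] by blast
qed

theorem theorem1:
  fixes \<rho> :: "'x::finite \<Rightarrow> real"
    and E :: "'y::finite \<Rightarrow> 'z::finite"
    and \<pi>0 :: "'x \<Rightarrow> real ^ 'y"
    and \<beta> :: real
    and R :: "real ^ 'z \<Rightarrow> real"
  assumes rho_nonneg: "\<forall>x. \<rho> x \<ge> 0"
    and rho_sum: "(\<Sum>x\<in>UNIV. \<rho> x) = 1"
    and pi0_pol: "\<pi>0 \<in> policies"
    and pi0_pos: "\<forall>x y. \<pi>0 x $ y > 0"
    and beta_pos: "\<beta> > 0"
    and R_convex: "convex_on prob_simplex R"
    and R_lsc: "lsc_on prob_simplex R"
  shows
    "(\<forall>\<pi>\<in>policies. Jobj \<rho> E \<pi>0 \<beta> R \<pi> = (SUP q\<in>int_families. Gobj \<rho> E \<pi>0 \<beta> R \<pi> q))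
     \<and> (\<forall>PP. PP \<noteq> {} \<and> PP \<subseteq> policies \<longrightarrow>
          (INF \<pi>\<in>PP. Jobj \<rho> E \<pi>0 \<beta> R \<pi>)
          = (INF \<pi>\<in>PP. SUP q\<in>int_families. Gobj \<rho> E \<pi>0 \<beta> R \<pi> q))
     \<and> (\<forall>q\<in>int_families.
          (\<exists>\<kappa>. \<forall>\<pi>\<in>policies. Gobj \<rho> E \<pi>0 \<beta> R \<pi> q
                 = \<beta> * (\<Sum>x\<in>UNIV. \<rho> x * KL (\<pi> x) (qtilde E \<pi>0 q x)) + \<kappa>)
          \<and> qtilde E \<pi>0 q \<in> policies
          \<and> (\<forall>\<pi>\<in>policies. Gobj \<rho> E \<pi>0 \<beta> R (qtilde E \<pi>0 q) q \<le> Gobj \<rho> E \<pi>0 \<beta> R \<pi> q)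
          \<and> (\<forall>\<pi>\<in>policies. Gobj \<rho> E \<pi>0 \<beta> R \<pi> q = Gobj \<rho> E \<pi>0 \<beta> R (qtilde E \<pi>0 q) q
                 \<longrightarrow> (\<forall>x. \<rho> x > 0 \<longrightarrow> \<pi> x = qtilde E \<pi>0 q x)))"
proof (intro conjI ballI allI impI)
  note duality = Jobj_eq_SUP_Gobj[OF rho_nonneg rho_sum beta_pos R_convex R_lsc]
  show "Jobj \<rho> E \<pi>0 \<beta> R \<pi> = (SUP q\<in>int_families. Gobj \<rho> E \<pi>0 \<beta> R \<pi> q)"
    if "\<pi> \<in> policies" for \<pi>
    using duality[OF that] .
  show "(INF \<pi>\<in>PP. Jobj \<rho> E \<pi>0 \<beta> R \<pi>) = (INF \<pi>\<in>PP. SUP q\<in>int_families. Gobj \<rho> E \<pi>0 \<beta> R \<pi> q)"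
    if "PP \<noteq> {} \<and> PP \<subseteq> policies" for PP
    using that duality by (intro INF_cong) auto
next
  fix q :: "'x \<Rightarrow> real^'z" assume q: "q \<in> int_families"
  show "\<exists>\<kappa>. \<forall>\<pi>\<in>policies. Gobj \<rho> E \<pi>0 \<beta> R \<pi> q
      = \<beta> * (\<Sum>x\<in>UNIV. \<rho> x * KL (\<pi> x) (qtilde E \<pi>0 q x)) + \<kappa>"
    using Gobj_eq_KL_qtilde[OF pi0_pos q] by blast
  show "qtilde E \<pi>0 q \<in> policies"
    using qtilde_in_policies[OF pi0_pos q] .
  show "Gobj \<rho> E \<pi>0 \<beta> R (qtilde E \<pi>0 q) q \<le> Gobj \<rho> E \<pi>0 \<beta> R \<pi> q" if "\<pi> \<in> policies" for \<pi>
    using Gobj_qtilde_le[OF rho_nonneg pi0_pos beta_pos q that] .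
  show "\<pi> x = qtilde E \<pi>0 q x"
    if "\<pi> \<in> policies" "Gobj \<rho> E \<pi>0 \<beta> R \<pi> q = Gobj \<rho> E \<pi>0 \<beta> R (qtilde E \<pi>0 q) q" "\<rho> x > 0"
    for \<pi> x
    using Gobj_eq_qtilde_imp_eq[OF rho_nonneg pi0_pos beta_pos q that] .
qed

end
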